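(* Let $G,H$ be graphs such that there is a homomorphism $\gamma:V(G)\to V(H)$. If $H\in$ CBU, then $G\in$ CBU.
   Context: Let $e_1,\ldots,e_d$ be the standard basis of $\mathbb{R}^d$. For $d\ge 1$, a graph belongs to $d$-CBU if one can assign to each vertex an axis-parallel box (product of $d$ closed intervals of positive length) in $\mathbb{R}^d$ such that the boxes have pairwise disjoint interiors, two distinct vertices are adjacent iff their boxes intersect, and any two intersecting boxes intersect in a $(d-1)$-dimensional box orthogonal to $e_1$. CBU is the union of $d$-CBU over all $d\ge 1$. *)

theory Defs
  imports Complex_Main
begin

definition graph :: "'a set \<Rightarrow> ('a \<Rightarrow> 'a \<Rightarrow> bool) \<Rightarrow> bool" where
  "graph V E \<longleftrightarrow> finite V \<and> (\<forall>u v. E u v \<longrightarrow> u \<in> V \<and> v \<in> V)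
     \<and> (\<forall>u v. E u v \<longrightarrow> E v u) \<and> (\<forall>u. \<not> E u u)"

definition graph_hom :: "'a set \<Rightarrow> ('a \<Rightarrow> 'a \<Rightarrow> bool) \<Rightarrow> 'b set \<Rightarrow> ('b \<Rightarrow> 'b \<Rightarrow> bool)
    \<Rightarrow> ('a \<Rightarrow> 'b) \<Rightarrow> bool" where
  "graph_hom V E W F g \<longleftrightarrow> (\<forall>v\<in>V. g v \<in> W) \<and> (\<forall>u v. E u v \<longrightarrow> F (g u) (g v))"

text \<open>Points of R^d are functions nat \<Rightarrow> real vanishing outside {0..<d}
  (coordinate 0 is the direction e_1).\<close>
definition pts :: "nat \<Rightarrow> (nat \<Rightarrow> real) set" where
  "pts d = {x. \<forall>i\<ge>d. x i = 0}"

definition cbox_d :: "nat \<Rightarrow> (nat \<Rightarrow> real) \<Rightarrow> (nat \<Rightarrow> real) \<Rightarrow> (nat \<Rightarrow> real) set" where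
  "cbox_d d a b = {x \<in> pts d. \<forall>i<d. a i \<le> x i \<and> x i \<le> b i}"

definition obox_d :: "nat \<Rightarrow> (nat \<Rightarrow> real) \<Rightarrow> (nat \<Rightarrow> real) \<Rightarrow> (nat \<Rightarrow> real) set" where
  "obox_d d a b = {x \<in> pts d. \<forall>i<d. a i < x i \<and> x i < b i}"

definition orth_facet :: "nat \<Rightarrow> (nat \<Rightarrow> real) set \<Rightarrow> bool" where
  "orth_facet d S \<longleftrightarrow> (\<exists>c lo hi. (\<forall>i. 1 \<le> i \<and> i < d \<longrightarrow> lo i < hi i) \<and>
     S = {x \<in> pts d. x 0 = c \<and> (\<forall>i. 1 \<le> i \<and> i < d \<longrightarrow> lo i \<le> x i \<and> x i \<le> hi i)})"

definition dCBU :: "nat \<Rightarrow> 'a set \<Rightarrow> ('a \<Rightarrow> 'a \<Rightarrow> bool) \<Rightarrow> bool" where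
  "dCBU d V E \<longleftrightarrow> (\<exists>a b :: 'a \<Rightarrow> nat \<Rightarrow> real.
     (\<forall>v\<in>V. \<forall>i<d. a v i < b v i) \<and>
     (\<forall>u\<in>V. \<forall>v\<in>V. u \<noteq> v \<longrightarrow> obox_d d (a u) (b u) \<inter> obox_d d (a v) (b v) = {}) \<and>
     (\<forall>u\<in>V. \<forall>v\<in>V. u \<noteq> v \<longrightarrow>
        (E u v \<longleftrightarrow> cbox_d d (a u) (b u) \<inter> cbox_d d (a v) (b v) \<noteq> {})) \<and>
     (\<forall>u\<in>V. \<forall>v\<in>V. u \<noteq> v \<longrightarrow> cbox_d d (a u) (b u) \<inter> cbox_d d (a v) (b v) \<noteq> {} \<longrightarrow>
        orth_facet d (cbox_d d (a u) (b u) \<inter> cbox_d d (a v) (b v))))"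

definition CBU :: "'a set \<Rightarrow> ('a \<Rightarrow> 'a \<Rightarrow> bool) \<Rightarrow> bool" where
  "CBU V E \<longleftrightarrow> (\<exists>d\<ge>1. dCBU d V E)"

end

theory Submission
  imports Defs
begin

text \<open>
  Pull the boxes of H back along \<gamma>: the boxes of adjacent vertices of G then touch along a
  facet orthogonal to e_1, because their images are adjacent in H. To separate the non-adjacent
  vertices, in particular those with the same image, add one coordinate per vertex w of G, in which
  w gets the interval [0,1], its neighbours [0,3] and all other vertices [2,3]. Adjacent vertices
  overlap with positive length in every new coordinate, so their common facet is merely thickened,
  while w and a non-neighbour are separated in the coordinate of w.
\<close>

lemma cbox_d_Int:
  "cbox_d d a b \<inter> cbox_d d a' b' = cbox_d d (\<lambda>i. max (a i) (a' i)) (\<lambda>i. min (b i) (b' i))"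
  unfolding cbox_d_def by auto

lemma obox_d_Int:
  "obox_d d a b \<inter> obox_d d a' b' = obox_d d (\<lambda>i. max (a i) (a' i)) (\<lambda>i. min (b i) (b' i))"
  unfolding obox_d_def by auto

lemma cbox_d_eq_empty_iff: "cbox_d d a b = {} \<longleftrightarrow> (\<exists>i<d. b i < a i)"
proof
  assume empty: "cbox_d d a b = {}"
  show "\<exists>i<d. b i < a i"
  proof (rule ccontr)
    assume "\<not> ?thesis"
    then have "\<forall>i<d. a i \<le> b i"
      by (meson leI)
    then have "(\<lambda>i. if i < d then a i else 0) \<in> cbox_d d a b"
      by (simp add: cbox_d_def pts_def)
    with empty show False by simp
  qed
qed (auto simp: cbox_d_def)

lemma obox_d_eq_empty_iff: "obox_d d a b = {} \<longleftrightarrow> (\<exists>i<d. b i \<le> a i)"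
proof
  assume empty: "obox_d d a b = {}"
  show "\<exists>i<d. b i \<le> a i"
  proof (rule ccontr)
    assume "\<not> ?thesis"
    then have "\<forall>i<d. a i < b i"
      by (meson not_le)
    then have "(\<lambda>i. if i < d then (a i + b i) / 2 else 0) \<in> obox_d d a b"
      by (simp add: obox_d_def pts_def)
    with empty show False by simp
  qed
qed (auto simp: obox_d_def)

lemma orth_facet_cbox_d_iff:
  assumes "1 \<le> d"
  shows "orth_facet d (cbox_d d a b) \<longleftrightarrow> a 0 = b 0 \<and> (\<forall>i. 1 \<le> i \<and> i < d \<longrightarrow> a i < b i)"
proof
  assume "orth_facet d (cbox_d d a b)"
  then obtain c lo hi where lo_hi: "\<forall>i. 1 \<le> i \<and> i < d \<longrightarrow> lo i < hi i"
    and box: "cbox_d d a b = {x \<in> pts d. x 0 = c \<and> (\<forall>i. 1 \<le> i \<and> i < d \<longrightarrow> lo i \<le> x i \<and> x i \<le> hi i)}"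
    unfolding orth_facet_def by blast
  define p where "p = (\<lambda>i. if i = 0 then c else if i < d then lo i else 0)"
  have p_upd: "p(k := hi k) \<in> cbox_d d a b" if "1 \<le> k" "k < d" for k
    using that lo_hi by (auto simp: box p_def pts_def less_imp_le)
  have "p \<in> cbox_d d a b"
    using lo_hi assms by (auto simp: box p_def pts_def)
  then have "\<forall>i<d. a i \<le> b i"
    by (metis cbox_d_eq_empty_iff empty_iff not_less)
  then have "(\<lambda>i. if i < d then a i else 0) \<in> cbox_d d a b" "(\<lambda>i. if i < d then b i else 0) \<in> cbox_d d a b"
    by (auto simp: cbox_d_def pts_def not_less)
  then have "a 0 = c" "b 0 = c"
    using assms by (auto simp: box)
  moreover have "a k < b k" if "1 \<le> k" "k < d" for k
  proof -
    have "a k \<le> lo k"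
      using \<open>p \<in> cbox_d d a b\<close> that by (auto simp: cbox_d_def p_def)
    moreover have "hi k \<le> b k"
      using p_upd[OF that] that by (auto simp: cbox_d_def)
    ultimately show ?thesis
      using lo_hi that by force
  qed
  ultimately show "a 0 = b 0 \<and> (\<forall>i. 1 \<le> i \<and> i < d \<longrightarrow> a i < b i)"
    by simp
next
  assume facet: "a 0 = b 0 \<and> (\<forall>i. 1 \<le> i \<and> i < d \<longrightarrow> a i < b i)"
  have "(\<forall>i<d. a i \<le> x i \<and> x i \<le> b i) \<longleftrightarrow>
      x 0 = a 0 \<and> (\<forall>i. 1 \<le> i \<and> i < d \<longrightarrow> a i \<le> x i \<and> x i \<le> b i)" for x
  proof
    assume "\<forall>i<d. a i \<le> x i \<and> x i \<le> b i"
    moreover from this have "a 0 \<le> x 0" "x 0 \<le> b 0"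
      using assms by auto
    ultimately show "x 0 = a 0 \<and> (\<forall>i. 1 \<le> i \<and> i < d \<longrightarrow> a i \<le> x i \<and> x i \<le> b i)"
      using facet by auto
  next
    assume "x 0 = a 0 \<and> (\<forall>i. 1 \<le> i \<and> i < d \<longrightarrow> a i \<le> x i \<and> x i \<le> b i)"
    then show "\<forall>i<d. a i \<le> x i \<and> x i \<le> b i"
      using facet by (metis less_one not_le order_refl)
  qed
  then have "cbox_d d a b =
      {x \<in> pts d. x 0 = a 0 \<and> (\<forall>i. 1 \<le> i \<and> i < d \<longrightarrow> a i \<le> x i \<and> x i \<le> b i)}"
    unfolding cbox_d_def by blast
  with facet show "orth_facet d (cbox_d d a b)"
    unfolding orth_facet_def by blast
qed

definition cbu_rep :: "nat \<Rightarrow> 'a set \<Rightarrow> ('a \<Rightarrow> 'a \<Rightarrow> bool)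
    \<Rightarrow> ('a \<Rightarrow> nat \<Rightarrow> real) \<Rightarrow> ('a \<Rightarrow> nat \<Rightarrow> real) \<Rightarrow> bool" where
  "cbu_rep d V E a b \<longleftrightarrow> (\<forall>v\<in>V. \<forall>i<d. a v i < b v i) \<and>
    (\<forall>u\<in>V. \<forall>v\<in>V. u \<noteq> v \<longrightarrow> (\<exists>i<d. min (b u i) (b v i) \<le> max (a u i) (a v i))) \<and>
    (\<forall>u\<in>V. \<forall>v\<in>V. u \<noteq> v \<longrightarrow> E u v \<longrightarrow>
      max (a u 0) (a v 0) = min (b u 0) (b v 0) \<and>
      (\<forall>i. 1 \<le> i \<and> i < d \<longrightarrow> max (a u i) (a v i) < min (b u i) (b v i))) \<and>
    (\<forall>u\<in>V. \<forall>v\<in>V. u \<noteq> v \<longrightarrow> \<not> E u v \<longrightarrow>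
      (\<exists>i<d. min (b u i) (b v i) < max (a u i) (a v i)))"

lemma touching_imp_overlap:
  fixes lo hi :: "nat \<Rightarrow> real"
  assumes "lo 0 = hi 0" "\<forall>i. 1 \<le> i \<and> i < d \<longrightarrow> lo i < hi i"
  shows "\<not> (\<exists>i<d. hi i < lo i)"
  using assms by (metis less_imp_le less_one not_le)

lemma dCBU_iff_cbu_rep:
  assumes "1 \<le> d"
  shows "dCBU d V E \<longleftrightarrow> (\<exists>a b. cbu_rep d V E a b)"
  unfolding dCBU_def cbu_rep_def cbox_d_Int obox_d_Int cbox_d_eq_empty_iff obox_d_eq_empty_iff
    orth_facet_cbox_d_iff[OF assms]
  apply (intro ex_cong1 conj_cong[OF refl])
  subgoal for a b
  proof -
    have "\<not> (\<exists>i<d. min (b u i) (b v i) < max (a u i) (a v i))"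
      if "max (a u 0) (a v 0) = min (b u 0) (b v 0)"
        "\<forall>i. 1 \<le> i \<and> i < d \<longrightarrow> max (a u i) (a v i) < min (b u i) (b v i)" for u v
      using touching_imp_overlap[of "\<lambda>i. max (a u i) (a v i)" "\<lambda>i. min (b u i) (b v i)"] that
      by simp
    then show ?thesis
      by blast
  qed
  done

definition coord_append :: "nat \<Rightarrow> (nat \<Rightarrow> real) \<Rightarrow> (nat \<Rightarrow> real) \<Rightarrow> nat \<Rightarrow> real" where
  "coord_append d x y = (\<lambda>i. if i < d then x i else y (i - d))"

lemma coord_append_low [simp]: "i < d \<Longrightarrow> coord_append d x y i = x i"
  by (simp add: coord_append_def)

lemma coord_append_high [simp]: "coord_append d x y (d + j) = y j"
  by (simp add: coord_append_def)

lemma all_less_add_iff: "(\<forall>i<d + (n::nat). P i) \<longleftrightarrow> (\<forall>i<d. P i) \<and> (\<forall>j<n. P (d + j))"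
proof
  assume "(\<forall>i<d. P i) \<and> (\<forall>j<n. P (d + j))"
  then show "\<forall>i<d + n. P i"
    by (metis add_diff_inverse_nat add_less_cancel_left)
qed auto

lemma ex_less_add_iff: "(\<exists>i<d + (n::nat). P i) \<longleftrightarrow> (\<exists>i<d. P i) \<or> (\<exists>j<n. P (d + j))"
  using all_less_add_iff[of d n "\<lambda>i. \<not> P i"] by blast

definition nbhd_lo :: "('a \<Rightarrow> 'a \<Rightarrow> bool) \<Rightarrow> (nat \<Rightarrow> 'a) \<Rightarrow> 'a \<Rightarrow> nat \<Rightarrow> real" where
  "nbhd_lo E g v j = (if v = g j \<or> E (g j) v then 0 else 2)"

definition nbhd_hi :: "(nat \<Rightarrow> 'a) \<Rightarrow> 'a \<Rightarrow> nat \<Rightarrow> real" where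
  "nbhd_hi g v j = (if v = g j then 1 else 3)"

lemma nbhd_lo_less_hi: "nbhd_lo E g v j < nbhd_hi g v j"
  by (simp add: nbhd_lo_def nbhd_hi_def)

lemma nbhd_overlap:
  assumes "E u v" "E v u" "u \<noteq> v"
  shows "max (nbhd_lo E g u j) (nbhd_lo E g v j) < min (nbhd_hi g u j) (nbhd_hi g v j)"
  using assms by (auto simp: nbhd_lo_def nbhd_hi_def)

lemma nbhd_separate:
  assumes "v \<noteq> g j" "\<not> E (g j) v"
  shows "min (nbhd_hi g (g j) j) (nbhd_hi g v j) < max (nbhd_lo E g (g j) j) (nbhd_lo E g v j)"
  using assms by (simp add: nbhd_lo_def nbhd_hi_def)

lemma cbu_rep_hom_extend:
  assumes rep: "cbu_rep d W F a b" and "1 \<le> d"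
    and hom: "graph_hom V E W F \<gamma>" and F_irrefl: "\<forall>w. \<not> F w w"
    and E_sym: "\<forall>u v. E u v \<longrightarrow> E v u"
    and enum: "\<forall>v\<in>V. \<exists>j<n. g j = v"
  shows "cbu_rep (d + n) V E (\<lambda>v. coord_append d (a (\<gamma> v)) (nbhd_lo E g v))
    (\<lambda>v. coord_append d (b (\<gamma> v)) (nbhd_hi g v))"
    (is "cbu_rep _ _ _ ?a ?b")
proof -
  have \<gamma>_W: "\<gamma> v \<in> W" if "v \<in> V" for v
    using hom that by (simp add: graph_hom_def)
  have \<gamma>_edge: "F (\<gamma> u) (\<gamma> v)" if "E u v" for u v
    using hom that by (simp add: graph_hom_def)
  have separate: "\<exists>i<d + n. min (?b u i) (?b v i) < max (?a u i) (?a v i)"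
    if "u \<in> V" "u \<noteq> v" "\<not> E u v" for u v
  proof -
    obtain j where "j < n" "g j = u"
      using enum \<open>u \<in> V\<close> by blast
    then show ?thesis
      using nbhd_separate[of v g j E] that by (auto simp: ex_less_add_iff)
  qed
  have "\<forall>v\<in>V. \<forall>i<d + n. ?a v i < ?b v i"
    using rep \<gamma>_W by (auto simp: all_less_add_iff cbu_rep_def nbhd_lo_less_hi)
  moreover have "\<exists>i<d + n. min (?b u i) (?b v i) \<le> max (?a u i) (?a v i)"
    if uv: "u \<in> V" "v \<in> V" "u \<noteq> v" for u v
  proof (cases "\<gamma> u = \<gamma> v")
    case True
    then have "\<not> E u v"
      using \<gamma>_edge F_irrefl by metis
    then show ?thesis
      using separate uv less_imp_le by blast
  next
    case False
    then obtain i where "i < d" "min (b (\<gamma> u) i) (b (\<gamma> v) i) \<le> max (a (\<gamma> u) i) (a (\<gamma> v) i)"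
      using rep \<gamma>_W uv unfolding cbu_rep_def by blast
    then show ?thesis
      by (metis coord_append_low trans_less_add1)
  qed
  moreover have "max (?a u 0) (?a v 0) = min (?b u 0) (?b v 0) \<and>
      (\<forall>i. 1 \<le> i \<and> i < d + n \<longrightarrow> max (?a u i) (?a v i) < min (?b u i) (?b v i))"
    if "u \<in> V" "v \<in> V" "u \<noteq> v" "E u v" for u v
  proof -
    have "\<gamma> u \<noteq> \<gamma> v"
      using \<gamma>_edge F_irrefl \<open>E u v\<close> by metis
    then have touch: "max (a (\<gamma> u) 0) (a (\<gamma> v) 0) = min (b (\<gamma> u) 0) (b (\<gamma> v) 0)"
      "\<forall>i. 1 \<le> i \<and> i < d \<longrightarrow> max (a (\<gamma> u) i) (a (\<gamma> v) i) < min (b (\<gamma> u) i) (b (\<gamma> v) i)"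
      using rep \<gamma>_W \<gamma>_edge that unfolding cbu_rep_def by blast+
    have "max (?a u i) (?a v i) < min (?b u i) (?b v i)" if "1 \<le> i" "i < d + n" for i
    proof (cases "i < d")
      case True
      then show ?thesis
        using touch that by simp
    next
      case False
      then obtain j where "i = d + j"
        using le_Suc_ex not_less by blast
      then show ?thesis
        using nbhd_overlap[of E u v] E_sym \<open>E u v\<close> \<open>u \<noteq> v\<close> by simp
    qed
    then show ?thesis
      using touch \<open>1 \<le> d\<close> by simp
  qed
  ultimately show ?thesis
    unfolding cbu_rep_def using separate by blast
qed

theorem mainTheorem16:
  fixes V :: "'a set" and E :: "'a \<Rightarrow> 'a \<Rightarrow> bool"
    and W :: "'b set" and F :: "'b \<Rightarrow> 'b \<Rightarrow> bool"
    and \<gamma> :: "'a \<Rightarrow> 'b"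
  assumes "graph V E" and "graph W F"
    and "graph_hom V E W F \<gamma>"
    and "CBU W F"
  shows "CBU V E"
proof -
  obtain d where "1 \<le> d" "dCBU d W F"
    using \<open>CBU W F\<close> by (auto simp: CBU_def)
  then obtain a b where rep: "cbu_rep d W F a b"
    using dCBU_iff_cbu_rep by blast
  obtain n and g :: "nat \<Rightarrow> 'a" where "V = g ` {i. i < n}"
    using \<open>graph V E\<close> unfolding graph_def finite_conv_nat_seg_image by blast
  then have "\<forall>v\<in>V. \<exists>j<n. g j = v"
    by blast
  then have "cbu_rep (d + n) V E (\<lambda>v. coord_append d (a (\<gamma> v)) (nbhd_lo E g v))
      (\<lambda>v. coord_append d (b (\<gamma> v)) (nbhd_hi g v))"
    using cbu_rep_hom_extend[OF rep \<open>1 \<le> d\<close> \<open>graph_hom V E W F \<gamma>\<close>] assms(1,2)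
    by (simp add: graph_def)
  then have "dCBU (d + n) V E"
    using dCBU_iff_cbu_rep \<open>1 \<le> d\<close> by (metis trans_le_add1)
  then show ?thesis
    using \<open>1 \<le> d\<close> by (auto simp: CBU_def intro: trans_le_add1)
qed

end
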